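(* Let $\Sigma\subset\mathbb G$ be a regular surface. At every non-characteristic point of $\Sigma$, the Riemannian mean curvature $\mathcal H_L$ of $\Sigma$ in $(\mathbb G,g_L)$ satisfies $$\lim_{L\to+\infty}\mathcal H_L=X_1(\bar p)+X_2(\bar q)-\bar p.$$
   Context: $\mathbb G=(0,\infty)\times\mathbb R^2$ is the affine group with coordinates $(x_1,x_2,x_3)$ and law $(a,b,c)\star(x,y,z)=(ax,ay+b,z+c)$. Let $X_1=x_1\partial_{x_1}$, $X_2=x_1\partial_{x_2}+\partial_{x_3}$, $X_3=x_1\partial_{x_2}$, with dual forms $\omega_1=x_1^{-1}dx_1$, $\omega_2=dx_3$, $\omega=x_1^{-1}dx_2-dx_3$. For $L>0$, $g_L=\omega_1\otimes\omega_1+\omega_2\otimes\omega_2+L\,\omega\otimes\omega$ (so $X_1,X_2,\widetilde X_3:=L^{-1/2}X_3$ is orthonormal) and $\nabla^L$ is its Levi-Civita connection. A regular surface is a Euclidean $C^2$-smooth compact oriented surface $\Sigma=\{u=0\}$ with $u:\mathbb G\to\mathbb R$ Euclidean $C^2$ and $(u_{x_1},u_{x_2},u_{x_3})\ne0$. Put $p=X_1u$, $q=X_2u$, $r=\widetilde X_3u$, $l=\sqrt{p^2+q^2}$, $l_L=\sqrt{p^2+q^2+r^2}$, $\bar p=p/l$, $\bar q=q/l$, $\bar p_L=p/l_L$, $\bar q_L=q/l_L$, $\bar r_L=r/l_L$. A point is non-characteristic if $l\ne0$. There, $v_L=\bar p_LX_1+\bar q_LX_2+\bar r_L\widetilde X_3$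 is the unit normal, and $e_1=\bar qX_1-\bar pX_2$, $e_2=\bar r_L\bar pX_1+\bar r_L\bar qX_2-\frac{l}{l_L}\widetilde X_3$ is an orthonormal tangent frame. The mean curvature is $\mathcal H_L=\langle\nabla^L_{e_1}v_L,e_1\rangle_L+\langle\nabla^L_{e_2}v_L,e_2\rangle_L$ (trace of the second fundamental form $(\langle\nabla^L_{e_i}v_L,e_j\rangle_L)_{i,j}$). *)

theory Defs
  imports "HOL-Analysis.Analysis"
begin

text \<open>Points of the affine group G = (0,inf) x R^2 are elements x of real^3 with x$1 > 0.
  Vector fields are written in Euclidean coordinates: V :: real^3 => real^3.\<close>

definition Gset :: "(real^3) set" where
  "Gset = {x. x$1 > 0}"

definition dd :: "(real^3 \<Rightarrow> 'b::real_normed_vector) \<Rightarrow> real^3 \<Rightarrow> real^3 \<Rightarrow> 'b" where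
  "dd f x v = frechet_derivative f (at x) v"

definition vfapp :: "(real^3 \<Rightarrow> real^3) \<Rightarrow> (real^3 \<Rightarrow> real) \<Rightarrow> real^3 \<Rightarrow> real" where
  "vfapp V f x = dd f x (V x)"

definition X1 :: "real^3 \<Rightarrow> real^3" where "X1 x = vector [x$1, 0, 0]"
definition X2 :: "real^3 \<Rightarrow> real^3" where "X2 x = vector [0, x$1, 1]"
definition X3 :: "real^3 \<Rightarrow> real^3" where "X3 x = vector [0, x$1, 0]"
definition X3t :: "real \<Rightarrow> real^3 \<Rightarrow> real^3" where "X3t L x = (1 / sqrt L) *\<^sub>R X3 x"

definition om1 :: "real^3 \<Rightarrow> real^3 \<Rightarrow> real" where "om1 x v = v$1 / x$1"
definition om2 :: "real^3 \<Rightarrow> real^3 \<Rightarrow> real" where "om2 x v = v$3"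
definition om :: "real^3 \<Rightarrow> real^3 \<Rightarrow> real" where "om x v = v$2 / x$1 - v$3"

definition gL :: "real \<Rightarrow> real^3 \<Rightarrow> real^3 \<Rightarrow> real^3 \<Rightarrow> real" where
  "gL L x v w = om1 x v * om1 x w + om2 x v * om2 x w + L * om x v * om x w"

definition gfield :: "real \<Rightarrow> (real^3 \<Rightarrow> real^3) \<Rightarrow> (real^3 \<Rightarrow> real^3) \<Rightarrow> real^3 \<Rightarrow> real" where
  "gfield L V W = (\<lambda>x. gL L x (V x) (W x))"

definition lie :: "(real^3 \<Rightarrow> real^3) \<Rightarrow> (real^3 \<Rightarrow> real^3) \<Rightarrow> real^3 \<Rightarrow> real^3" where
  "lie V W x = dd W x (V x) - dd V x (W x)"

text \<open>Levi-Civita connection of g_L, given through the Koszul formula: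
  LC_inner L V W Z x = g_L(nabla^L_V W, Z)(x).\<close>
definition LC_inner :: "real \<Rightarrow> (real^3 \<Rightarrow> real^3) \<Rightarrow> (real^3 \<Rightarrow> real^3) \<Rightarrow> (real^3 \<Rightarrow> real^3)
    \<Rightarrow> real^3 \<Rightarrow> real" where
  "LC_inner L V W Z x = (1/2) *
     ( vfapp V (gfield L W Z) x + vfapp W (gfield L V Z) x - vfapp Z (gfield L V W) x
     + gL L x (lie V W x) (Z x) - gL L x (lie V Z x) (W x) - gL L x (lie W Z x) (V x))"

definition pu :: "(real^3 \<Rightarrow> real) \<Rightarrow> real^3 \<Rightarrow> real" where "pu u = vfapp X1 u"
definition qu :: "(real^3 \<Rightarrow> real) \<Rightarrow> real^3 \<Rightarrow> real" where "qu u = vfapp X2 u"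
definition ru :: "real \<Rightarrow> (real^3 \<Rightarrow> real) \<Rightarrow> real^3 \<Rightarrow> real" where "ru L u = vfapp (X3t L) u"
definition lu :: "(real^3 \<Rightarrow> real) \<Rightarrow> real^3 \<Rightarrow> real" where
  "lu u x = sqrt ((pu u x)\<^sup>2 + (qu u x)\<^sup>2)"
definition lLu :: "real \<Rightarrow> (real^3 \<Rightarrow> real) \<Rightarrow> real^3 \<Rightarrow> real" where
  "lLu L u x = sqrt ((pu u x)\<^sup>2 + (qu u x)\<^sup>2 + (ru L u x)\<^sup>2)"
definition pbar :: "(real^3 \<Rightarrow> real) \<Rightarrow> real^3 \<Rightarrow> real" where "pbar u x = pu u x / lu u x"
definition qbar :: "(real^3 \<Rightarrow> real) \<Rightarrow> real^3 \<Rightarrow> real" where "qbar u x = qu u x / lu u x"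
definition pbarL :: "real \<Rightarrow> (real^3 \<Rightarrow> real) \<Rightarrow> real^3 \<Rightarrow> real" where "pbarL L u x = pu u x / lLu L u x"
definition qbarL :: "real \<Rightarrow> (real^3 \<Rightarrow> real) \<Rightarrow> real^3 \<Rightarrow> real" where "qbarL L u x = qu u x / lLu L u x"
definition rbarL :: "real \<Rightarrow> (real^3 \<Rightarrow> real) \<Rightarrow> real^3 \<Rightarrow> real" where "rbarL L u x = ru L u x / lLu L u x"

text \<open>Unit normal and orthonormal tangent frame at non-characteristic points.\<close>
definition nuL :: "real \<Rightarrow> (real^3 \<Rightarrow> real) \<Rightarrow> real^3 \<Rightarrow> real^3" where
  "nuL L u x = pbarL L u x *\<^sub>R X1 x + qbarL L u x *\<^sub>R X2 x + rbarL L u x *\<^sub>R X3t L x"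
definition e1 :: "(real^3 \<Rightarrow> real) \<Rightarrow> real^3 \<Rightarrow> real^3" where
  "e1 u x = qbar u x *\<^sub>R X1 x - pbar u x *\<^sub>R X2 x"
definition e2 :: "real \<Rightarrow> (real^3 \<Rightarrow> real) \<Rightarrow> real^3 \<Rightarrow> real^3" where
  "e2 L u x = (rbarL L u x * pbar u x) *\<^sub>R X1 x + (rbarL L u x * qbar u x) *\<^sub>R X2 x
              - (lu u x / lLu L u x) *\<^sub>R X3t L x"

text \<open>Riemannian mean curvature H_L (trace of the second fundamental form).\<close>
definition HL :: "real \<Rightarrow> (real^3 \<Rightarrow> real) \<Rightarrow> real^3 \<Rightarrow> real" where
  "HL L u x = LC_inner L (e1 u) (nuL L u) (e1 u) x + LC_inner L (e2 L u) (nuL L u) (e2 L u) x"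

definition C2_on :: "(real^3) set \<Rightarrow> (real^3 \<Rightarrow> real) \<Rightarrow> bool" where
  "C2_on S u \<longleftrightarrow> (\<exists>Du :: real^3 \<Rightarrow> ((real^3) \<Rightarrow>\<^sub>L real). \<exists>D2u :: real^3 \<Rightarrow> ((real^3) \<Rightarrow>\<^sub>L ((real^3) \<Rightarrow>\<^sub>L real)).
      (\<forall>x\<in>S. (u has_derivative blinfun_apply (Du x)) (at x)) \<and>
      (\<forall>x\<in>S. (Du has_derivative blinfun_apply (D2u x)) (at x)) \<and>
      continuous_on S D2u)"

text \<open>Regular surface Sigma = {u = 0} in G: u Euclidean C^2 on G, Euclidean gradient
  nonvanishing on Sigma, Sigma compact (orientation is given by u).\<close>
definition regular_surface :: "(real^3 \<Rightarrow> real) \<Rightarrow> bool" where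
  "regular_surface u \<longleftrightarrow> C2_on Gset u \<and>
     (\<forall>x\<in>Gset. u x = 0 \<longrightarrow> frechet_derivative u (at x) \<noteq> (\<lambda>v. 0)) \<and>
     compact {x\<in>Gset. u x = 0}"

end

theory Submission
  imports Defs
begin

(* Near a non-characteristic point e1 and e2 are unit fields, so the Koszul formula reduces the
   diagonal entries of the second fundamental form to <[e_i, nu_L], e_i>.  In the frame X1, X2, X3,
   whose only nonzero brackets are [X1, X2] = [X1, X3] = X3, these are explicit in pbar_L, qbar_L,
   rbar_L and their first derivatives, all of which depend smoothly on the parameter 1/sqrt L.
   As L tends to infinity, rbar_L tends to 0 and pbar_L, qbar_L tend to pbar, qbar together with
   their derivatives.  The first entry then tends to X1 pbar + X2 qbar; in the second, the factor L
   of the metric cancels the two factors 1/sqrt L of the X3-components, leaving -pbar. *)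

section \<open>The frame X1, X2, X3\<close>

lemma has_derivative_X1: "(X1 has_derivative X1) (at y)"
  by (intro bounded_linear_imp_has_derivative linear_conv_bounded_linear[THEN iffD1] linearI)
     (auto simp: X1_def vec_eq_iff forall_3 vector_3)

lemma has_derivative_X3: "(X3 has_derivative X3) (at y)"
  by (intro bounded_linear_imp_has_derivative linear_conv_bounded_linear[THEN iffD1] linearI)
     (auto simp: X3_def vec_eq_iff forall_3 vector_3)

lemma has_derivative_X2: "(X2 has_derivative X3) (at y)"
proof -
  have "X2 = (\<lambda>y. X3 y + vector [0, 0, 1])"
    by (auto simp: X2_def X3_def vec_eq_iff forall_3 vector_3)
  moreover have "((\<lambda>y. X3 y + vector [0, 0, 1]) has_derivative X3) (at y)"
    by (rule has_derivative_add_const[OF has_derivative_X3])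
  ultimately show ?thesis
    by simp
qed

definition frame_vec :: "real^3 \<Rightarrow> real \<Rightarrow> real \<Rightarrow> real \<Rightarrow> real^3" where
  "frame_vec y a1 a2 a3 = a1 *\<^sub>R X1 y + a2 *\<^sub>R X2 y + a3 *\<^sub>R X3 y"

lemma gL_frame_vec:
  assumes "y $ 1 \<noteq> 0"
  shows "gL L y (frame_vec y a1 a2 a3) (frame_vec y b1 b2 b3) = a1 * b1 + a2 * b2 + L * a3 * b3"
  using assms
  by (simp add: gL_def om1_def om2_def om_def frame_vec_def X1_def X2_def X3_def vector_3 field_simps)

lemma lie_frame_vec:
  assumes "(v1 has_derivative Dv1) (at x)" "(v2 has_derivative Dv2) (at x)"
    "(v3 has_derivative Dv3) (at x)" "(w1 has_derivative Dw1) (at x)"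
    "(w2 has_derivative Dw2) (at x)" "(w3 has_derivative Dw3) (at x)"
  defines "V \<equiv> frame_vec x (v1 x) (v2 x) (v3 x)" and "W \<equiv> frame_vec x (w1 x) (w2 x) (w3 x)"
  shows "lie (\<lambda>y. frame_vec y (v1 y) (v2 y) (v3 y)) (\<lambda>y. frame_vec y (w1 y) (w2 y) (w3 y)) x
    = frame_vec x (Dw1 V - Dv1 W) (Dw2 V - Dv2 W)
        (Dw3 V - Dv3 W + v1 x * w2 x - v2 x * w1 x + v1 x * w3 x - v3 x * w1 x)"
proof -
  have frame_derivative: "((\<lambda>y. frame_vec y (c1 y) (c2 y) (c3 y)) has_derivative
      (\<lambda>h. frame_vec x (Dc1 h) (Dc2 h) (Dc3 h) + c1 x *\<^sub>R X1 h + (c2 x + c3 x) *\<^sub>R X3 h)) (at x)"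
    if "(c1 has_derivative Dc1) (at x)" "(c2 has_derivative Dc2) (at x)"
      "(c3 has_derivative Dc3) (at x)" for c1 c2 c3 Dc1 Dc2 Dc3
    unfolding frame_vec_def
    by (rule has_derivative_eq_rhs[OF has_derivative_add[OF has_derivative_add]],
        (rule has_derivative_scaleR that has_derivative_X1 has_derivative_X2 has_derivative_X3)+)
       (simp add: algebra_simps)
  show ?thesis
    unfolding lie_def dd_def
      frechet_derivative_at[OF frame_derivative[OF assms(1-3)], symmetric]
      frechet_derivative_at[OF frame_derivative[OF assms(4-6)], symmetric] V_def W_def
    by (simp add: frame_vec_def X1_def X2_def X3_def vec_eq_iff forall_3 vector_3 algebra_simps)
qed

lemma LC_inner_self:
  "LC_inner L V W V x = vfapp W (gfield L V V) x / 2 + gL L x (lie V W x) (V x)"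
proof -
  have "gfield L W V = gfield L V W" by (auto simp: gfield_def gL_def)
  moreover have "lie V V x = 0" "lie W V x = - lie V W x" by (simp_all add: lie_def)
  moreover have "gL L x 0 w = 0" "gL L x (- v) w = - gL L x v w" for v w
    by (simp_all add: gL_def om1_def om2_def om_def field_simps)
  ultimately show ?thesis by (simp add: LC_inner_def)
qed

lemma LC_inner_unit_field:
  assumes "open S" "x \<in> S" "\<And>y. y \<in> S \<Longrightarrow> gfield L V V y = 1"
  shows "LC_inner L V W V x = gL L x (lie V W x) (V x)"
proof -
  have "(gfield L V V has_derivative (\<lambda>h. 0)) (at x)"
    using has_derivative_transform_within_open[OF has_derivative_const assms(1,2)] assms(3)
    by metis
  then show ?thesis
    by (simp add: LC_inner_self vfapp_def dd_def frechet_derivative_at[symmetric])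
qed

definition unit_coord_deriv :: "real \<Rightarrow> real \<Rightarrow> real \<Rightarrow> real \<Rightarrow> real \<Rightarrow> real \<Rightarrow> real" where
  "unit_coord_deriv a b c A B C =
     A / sqrt (a\<^sup>2 + b\<^sup>2 + c\<^sup>2)
       - a * (a * A + b * B + c * C) / sqrt (a\<^sup>2 + b\<^sup>2 + c\<^sup>2) ^ 3"

lemma has_derivative_unit_coord:
  fixes f g k :: "'a::real_normed_vector \<Rightarrow> real"
  assumes "(f has_derivative F) (at x)" "(g has_derivative G) (at x)" "(k has_derivative K) (at x)"
    and "(f x)\<^sup>2 + (g x)\<^sup>2 + (k x)\<^sup>2 \<noteq> 0"
  shows "((\<lambda>y. f y / sqrt ((f y)\<^sup>2 + (g y)\<^sup>2 + (k y)\<^sup>2)) has_derivative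
      (\<lambda>h. unit_coord_deriv (f x) (g x) (k x) (F h) (G h) (K h))) (at x)"
proof -
  define N where "N = (f x)\<^sup>2 + (g x)\<^sup>2 + (k x)\<^sup>2"
  have "N > 0"
    using assms(4) by (simp add: N_def add_nonneg_nonneg order_le_neq_trans)
  have "((\<lambda>y. f y * f y + g y * g y + k y * k y) has_derivative
      (\<lambda>h. 2 * (f x * F h + g x * G h + k x * K h))) (at x)"
    by (rule has_derivative_eq_rhs[OF has_derivative_add[OF has_derivative_add]],
        (rule has_derivative_mult assms(1-3))+) (simp add: fun_eq_iff algebra_simps)
  then have "((\<lambda>y. sqrt ((f y)\<^sup>2 + (g y)\<^sup>2 + (k y)\<^sup>2)) has_derivative
      (\<lambda>h. (f x * F h + g x * G h + k x * K h) / sqrt N)) (at x)"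
    using \<open>N > 0\<close> unfolding power2_eq_square N_def
    by (rule_tac has_derivative_eq_rhs, rule_tac has_derivative_real_sqrt) (auto simp: fun_eq_iff field_simps)
  moreover have "sqrt ((f x)\<^sup>2 + (g x)\<^sup>2 + (k x)\<^sup>2) \<noteq> 0"
    using \<open>N > 0\<close> by (simp add: N_def)
  ultimately have "((\<lambda>y. f y / sqrt ((f y)\<^sup>2 + (g y)\<^sup>2 + (k y)\<^sup>2)) has_derivative
      (\<lambda>h. (F h * sqrt N - f x * ((f x * F h + g x * G h + k x * K h) / sqrt N)) / (sqrt N * sqrt N)))
      (at x)"
    unfolding N_def by (rule has_derivative_divide'[OF assms(1)])
  then show ?thesis
    unfolding N_def[symmetric] unit_coord_deriv_def
    by (rule has_derivative_eq_rhs)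
       (use \<open>N > 0\<close> in \<open>simp add: fun_eq_iff field_simps power3_eq_cube\<close>)
qed

lemma tendsto_unit_coord_deriv:
  assumes "(a \<longlongrightarrow> a0) F" "(b \<longlongrightarrow> b0) F" "(c \<longlongrightarrow> c0) F"
    "(A \<longlongrightarrow> A0) F" "(B \<longlongrightarrow> B0) F" "(C \<longlongrightarrow> C0) F"
    and "a0\<^sup>2 + b0\<^sup>2 + c0\<^sup>2 \<noteq> 0"
  shows "((\<lambda>L. unit_coord_deriv (a L) (b L) (c L) (A L) (B L) (C L))
      \<longlongrightarrow> unit_coord_deriv a0 b0 c0 A0 B0 C0) F"
proof -
  have "sqrt (a0\<^sup>2 + b0\<^sup>2 + c0\<^sup>2) \<noteq> 0" "sqrt (a0\<^sup>2 + b0\<^sup>2 + c0\<^sup>2) ^ 3 \<noteq> 0"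
    using assms(7) by simp_all
  then show ?thesis
    unfolding unit_coord_deriv_def by (intro tendsto_intros assms)
qed

lemma tendsto_linear_apply:
  fixes f :: "'c \<Rightarrow> 'a::euclidean_space \<Rightarrow> 'b::real_normed_vector"
  assumes "\<And>L. linear (f L)" "linear g" "\<And>h. ((\<lambda>L. f L h) \<longlongrightarrow> g h) F" "(v \<longlongrightarrow> w) F"
  shows "((\<lambda>L. f L (v L)) \<longlongrightarrow> g w) F"
proof -
  have expand: "\<phi> z = (\<Sum>b\<in>Basis. (z \<bullet> b) *\<^sub>R \<phi> b)"
    if "linear \<phi>" for \<phi> :: "'a \<Rightarrow> 'b" and z
    by (metis (no_types, lifting) euclidean_representation linear_scale linear_sum that sum.cong)
  have "f L (v L) = (\<Sum>b\<in>Basis. (v L \<bullet> b) *\<^sub>R f L b)" for L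
    by (rule expand[OF assms(1)])
  moreover have "g w = (\<Sum>b\<in>Basis. (w \<bullet> b) *\<^sub>R g b)"
    by (rule expand[OF assms(2)])
  ultimately show ?thesis
    by (simp only:) (intro tendsto_intros assms)
qed

lemma tendsto_div_sqrt_at_top:
  assumes "(f \<longlongrightarrow> c) at_top"
  shows "((\<lambda>L::real. f L / sqrt L) \<longlongrightarrow> 0) at_top"
  using tendsto_divide_0[OF assms sqrt_at_top[THEN filterlim_at_top_imp_at_infinity]] .

lemma dd_eq_derivative: "(f has_derivative F) (at x) \<Longrightarrow> dd f x = F"
  by (simp add: dd_def[abs_def] frechet_derivative_at[symmetric])

lemma has_derivative_dd: "(f has_derivative F) (at x) \<Longrightarrow> (f has_derivative dd f x) (at x)"
  by (simp add: dd_eq_derivative)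

lemma C2_on_differentiable: "C2_on S u \<Longrightarrow> y \<in> S \<Longrightarrow> u differentiable (at y)"
  unfolding C2_on_def differentiable_def by blast

lemma differentiable_vfapp:
  assumes "C2_on S u" "open S" "y \<in> S" and "(X has_derivative X') (at y)"
  shows "vfapp X u differentiable (at y)"
proof -
  obtain Du D2u where Du: "\<And>z. z \<in> S \<Longrightarrow> (u has_derivative blinfun_apply (Du z)) (at z)"
      and D2u: "\<And>z. z \<in> S \<Longrightarrow> (Du has_derivative blinfun_apply (D2u z)) (at z)"
    using assms(1) unfolding C2_on_def by blast
  have "((\<lambda>z. blinfun_apply (Du z) (X z)) has_derivative
      (\<lambda>h. blinfun_apply (Du y) (X' h) + blinfun_apply (D2u y h) (X y))) (at y)"
    by (rule bounded_bilinear.FDERIV[OF bounded_bilinear_blinfun_apply D2u[OF assms(3)] assms(4)])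
  then have "(vfapp X u has_derivative
      (\<lambda>h. blinfun_apply (Du y) (X' h) + blinfun_apply (D2u y h) (X y))) (at y)"
    by (rule has_derivative_transform_within_open[OF _ assms(2,3)])
       (simp add: vfapp_def dd_def frechet_derivative_at[OF Du, symmetric])
  then show ?thesis
    unfolding differentiable_def by blast
qed

lemma vfapp_scaleR:
  assumes "u differentiable (at y)"
  shows "vfapp (\<lambda>z. c *\<^sub>R X z) u y = c * vfapp X u y"
  using linear_frechet_derivative[OF assms] by (simp add: vfapp_def dd_def linear_scale)

section \<open>Frames adapted to the level sets of u\<close>

lemma open_Gset: "open Gset"
  unfolding Gset_def by (intro open_Collect_less) (auto intro: continuous_intros)

lemma lu_sq: "(lu u y)\<^sup>2 = (pu u y)\<^sup>2 + (qu u y)\<^sup>2"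
  by (simp add: lu_def)

lemma lLu_sq: "(lLu L u y)\<^sup>2 = (lu u y)\<^sup>2 + (ru L u y)\<^sup>2"
  by (simp add: lLu_def lu_sq add_nonneg_nonneg)

lemma pbar_qbar_sq:
  assumes "lu u y \<noteq> 0"
  shows "(pbar u y)\<^sup>2 + (qbar u y)\<^sup>2 = 1"
proof -
  have "(lu u y)\<^sup>2 \<noteq> 0"
    using assms by simp
  then show ?thesis
    by (simp add: pbar_def qbar_def power_divide add_divide_distrib[symmetric] lu_sq)
qed

lemma rbarL_lu_div_lLu_sq:
  assumes "lu u y \<noteq> 0"
  shows "(rbarL L u y)\<^sup>2 + (lu u y / lLu L u y)\<^sup>2 = 1"
proof -
  have "(lLu L u y)\<^sup>2 \<noteq> 0"
    using assms lLu_sq[of L u y] by (simp add: add_nonneg_eq_0_iff)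
  then show ?thesis
    by (simp add: rbarL_def lLu_sq power_divide add_divide_distrib[symmetric] add.commute)
qed

lemma lu_div_lLu_eq:
  assumes "lu u y \<noteq> 0"
  shows "lu u y / lLu L u y = pbar u y * pbarL L u y + qbar u y * qbarL L u y"
proof -
  have "pbar u y * pbarL L u y + qbar u y * qbarL L u y
      = ((pu u y)\<^sup>2 + (qu u y)\<^sup>2) / (lu u y * lLu L u y)"
    by (simp add: pbar_def qbar_def pbarL_def qbarL_def add_divide_distrib power2_eq_square)
  also have "\<dots> = (lu u y)\<^sup>2 / (lu u y * lLu L u y)"
    by (simp add: lu_sq)
  also have "\<dots> = lu u y / lLu L u y"
    using assms by (simp add: power2_eq_square)
  finally show ?thesis ..
qed

lemma pbar_qbarL_eq: "pbar u y * qbarL L u y = qbar u y * pbarL L u y"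
  by (simp add: pbar_def qbar_def pbarL_def qbarL_def)

lemma e1_frame: "e1 u = (\<lambda>y. frame_vec y (qbar u y) (- pbar u y) 0)"
  by (simp add: fun_eq_iff e1_def frame_vec_def)

lemma nuL_frame: "nuL L u = (\<lambda>y. frame_vec y (pbarL L u y) (qbarL L u y) (rbarL L u y / sqrt L))"
  by (simp add: fun_eq_iff nuL_def X3t_def frame_vec_def)

lemma e2_frame:
  "e2 L u = (\<lambda>y. frame_vec y (rbarL L u y * pbar u y) (rbarL L u y * qbar u y)
      (- (lu u y / lLu L u y / sqrt L)))"
  by (simp add: fun_eq_iff e2_def X3t_def frame_vec_def)

lemma gfield_e1:
  assumes "y $ 1 \<noteq> 0" "lu u y \<noteq> 0"
  shows "gfield L (e1 u) (e1 u) y = 1"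
  using pbar_qbar_sq[OF assms(2)]
  by (simp add: gfield_def e1_frame gL_frame_vec[OF assms(1)] power2_eq_square add.commute)

lemma gfield_e2:
  assumes "y $ 1 \<noteq> 0" "lu u y \<noteq> 0" "L > 0"
  shows "gfield L (e2 L u) (e2 L u) y = 1"
proof -
  have scale: "L * (- (c / sqrt L)) * (- (c / sqrt L)) = c\<^sup>2" for c
    using assms(3) by (simp add: power2_eq_square)
  have "gfield L (e2 L u) (e2 L u) y
      = (rbarL L u y)\<^sup>2 * ((pbar u y)\<^sup>2 + (qbar u y)\<^sup>2) + (lu u y / lLu L u y)\<^sup>2"
    unfolding gfield_def e2_frame gL_frame_vec[OF assms(1)] scale
    by (simp add: power2_eq_square algebra_simps)
  then show ?thesis
    by (simp add: pbar_qbar_sq[OF assms(2)] rbarL_lu_div_lLu_sq[OF assms(2)])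
qed

(* The X1-, X2- and X3-contributions to <[e2_L, nu_L], e2_L>, with s = sqrt L. *)
lemma normal_term_identity:
  fixes a b P Q R m s L DPV DQV DRW DRV DmW DaW DbW :: real
  assumes "a * DaW + b * DbW = 0" "a\<^sup>2 + b\<^sup>2 = 1" "a * Q = b * P" "s * s = L" "s \<noteq> 0"
  shows "(DPV - (R * DaW + DRW * a)) * (R * a) + (DQV - (R * DbW + DRW * b)) * (R * b)
      + L * (DRV / s - - (DmW / s) + R * a * Q - R * b * P + R * a * (R / s) - - (m / s) * P)
        * - (m / s)
    = R * (a * DPV + b * DQV - DRW) - m * (DRV + DmW + R\<^sup>2 * a + m * P)"
proof -
  have "L * (DRV / s - - (DmW / s) + R * a * Q - R * b * P + R * a * (R / s) - - (m / s) * P)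
        * - (m / s) = - m * (DRV + DmW + R\<^sup>2 * a + m * P) - m * s * R * (a * Q - b * P)"
    using assms(5) by (simp add: assms(4)[symmetric] field_simps power2_eq_square)
  then show ?thesis
    using assms(1-3) by algebra
qed

section \<open>The limit at a non-characteristic point\<close>

locale noncharacteristic_point =
  fixes u :: "real^3 \<Rightarrow> real" and x :: "real^3"
  assumes C2: "C2_on Gset u" and x_in_G: "x \<in> Gset" and noncharacteristic: "lu u x \<noteq> 0"
begin

lemma x1_nonzero: "x $ 1 \<noteq> 0"
  using x_in_G by (simp add: Gset_def)

lemma differentiable_frame_derivatives:
  assumes "y \<in> Gset"
  shows "pu u differentiable (at y)" "qu u differentiable (at y)"
    "vfapp X3 u differentiable (at y)"
  unfolding pu_def qu_def
  by (rule differentiable_vfapp[OF C2 open_Gset assms];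
      rule has_derivative_X1 has_derivative_X2 has_derivative_X3)+

lemma ru_eq: "y \<in> Gset \<Longrightarrow> ru L u y = vfapp X3 u y / sqrt L"
  using vfapp_scaleR[OF C2_on_differentiable[OF C2], of y "1 / sqrt L" X3]
  by (simp add: ru_def X3t_def[abs_def])

lemma open_noncharacteristic: "open {y \<in> Gset. lu u y \<noteq> 0}"
proof -
  have "continuous (at y) (lu u)" if "y \<in> Gset" for y
    using differentiable_frame_derivatives[OF that] unfolding lu_def[abs_def]
    by (intro continuous_intros differentiable_imp_continuous_within)
  then have "continuous_on Gset (lu u)"
    by (simp add: continuous_at_imp_continuous_on)
  then have "open (lu u -` (- {0}) \<inter> Gset)"
    using continuous_on_open_vimage[OF open_Gset] by blast
  moreover have "lu u -` (- {0}) \<inter> Gset = {y \<in> Gset. lu u y \<noteq> 0}"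
    by blast
  ultimately show ?thesis
    by simp
qed

lemma has_derivative_frame_derivatives:
  "(pu u has_derivative dd (pu u) x) (at x)" "(qu u has_derivative dd (qu u) x) (at x)"
  "((\<lambda>y. vfapp X3 u y / c) has_derivative (\<lambda>h. dd (vfapp X3 u) x h / c)) (at x)"
proof -
  show "(pu u has_derivative dd (pu u) x) (at x)" "(qu u has_derivative dd (qu u) x) (at x)"
    using differentiable_frame_derivatives[OF x_in_G] by (simp_all add: dd_def[abs_def] frechet_derivative_works)
  have "(vfapp X3 u has_derivative dd (vfapp X3 u) x) (at x)"
    using differentiable_frame_derivatives[OF x_in_G] by (simp add: dd_def[abs_def] frechet_derivative_works)
  then show "((\<lambda>y. vfapp X3 u y / c) has_derivative (\<lambda>h. dd (vfapp X3 u) x h / c)) (at x)"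
    by (rule bounded_linear.has_derivative[OF bounded_linear_divide])
qed

lemma pu_qu_sq_nonzero: "(pu u x)\<^sup>2 + (qu u x)\<^sup>2 + c\<^sup>2 \<noteq> 0"
  using noncharacteristic lu_sq[of u x]
  by (metis add_nonneg_eq_0_iff zero_le_power2 power_not_zero zero_neq_numeral)

lemma has_derivative_pbarL:
  "(pbarL L u has_derivative (\<lambda>h. unit_coord_deriv (pu u x) (qu u x) (vfapp X3 u x / sqrt L)
      (dd (pu u) x h) (dd (qu u) x h) (dd (vfapp X3 u) x h / sqrt L))) (at x)"
  using has_derivative_unit_coord[OF has_derivative_frame_derivatives pu_qu_sq_nonzero]
  by (rule has_derivative_transform_within_open[OF _ open_Gset x_in_G])
     (simp add: pbarL_def lLu_def ru_eq)

lemma has_derivative_qbarL: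
  "(qbarL L u has_derivative (\<lambda>h. unit_coord_deriv (qu u x) (pu u x) (vfapp X3 u x / sqrt L)
      (dd (qu u) x h) (dd (pu u) x h) (dd (vfapp X3 u) x h / sqrt L))) (at x)"
proof -
  have "(qu u x)\<^sup>2 + (pu u x)\<^sup>2 + (vfapp X3 u x / sqrt L)\<^sup>2 \<noteq> 0"
    using pu_qu_sq_nonzero[of "vfapp X3 u x / sqrt L"] by (simp add: add_ac)
  from has_derivative_unit_coord[OF has_derivative_frame_derivatives(2,1,3) this] show ?thesis
    by (rule has_derivative_transform_within_open[OF _ open_Gset x_in_G])
       (simp add: qbarL_def lLu_def ru_eq add_ac)
qed

lemma has_derivative_rbarL:
  "(rbarL L u has_derivative (\<lambda>h. unit_coord_deriv (vfapp X3 u x / sqrt L) (pu u x) (qu u x)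
      (dd (vfapp X3 u) x h / sqrt L) (dd (pu u) x h) (dd (qu u) x h))) (at x)"
proof -
  have "(vfapp X3 u x / sqrt L)\<^sup>2 + (pu u x)\<^sup>2 + (qu u x)\<^sup>2 \<noteq> 0"
    using pu_qu_sq_nonzero[of "vfapp X3 u x / sqrt L"] by (simp add: add_ac)
  from has_derivative_unit_coord[OF has_derivative_frame_derivatives(3,1,2) this] show ?thesis
    by (rule has_derivative_transform_within_open[OF _ open_Gset x_in_G])
       (simp add: rbarL_def lLu_def ru_eq add_ac)
qed

lemma has_derivative_pbar:
  "(pbar u has_derivative (\<lambda>h. unit_coord_deriv (pu u x) (qu u x) 0
      (dd (pu u) x h) (dd (qu u) x h) 0)) (at x)"
  using has_derivative_unit_coord[OF has_derivative_frame_derivatives(1,2) has_derivative_const[of 0]]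
    pu_qu_sq_nonzero[of 0]
  by (simp add: pbar_def[abs_def] lu_def)

lemma has_derivative_qbar:
  "(qbar u has_derivative (\<lambda>h. unit_coord_deriv (qu u x) (pu u x) 0
      (dd (qu u) x h) (dd (pu u) x h) 0)) (at x)"
  using has_derivative_unit_coord[OF has_derivative_frame_derivatives(2,1) has_derivative_const[of 0]]
    pu_qu_sq_nonzero[of 0]
  by (simp add: qbar_def[abs_def] lu_def add.commute)

lemmas has_derivative_dd_coeffs =
  has_derivative_dd[OF has_derivative_pbar] has_derivative_dd[OF has_derivative_qbar]
  has_derivative_dd[OF has_derivative_pbarL] has_derivative_dd[OF has_derivative_qbarL]
  has_derivative_dd[OF has_derivative_rbarL]

lemma pbar_dd_orthogonal: "pbar u x * dd (pbar u) x h + qbar u x * dd (qbar u) x h = 0"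
proof -
  have "((\<lambda>y. pbar u y * pbar u y + qbar u y * qbar u y) has_derivative
      (\<lambda>h. pbar u x * dd (pbar u) x h + dd (pbar u) x h * pbar u x
         + (qbar u x * dd (qbar u) x h + dd (qbar u) x h * qbar u x))) (at x)"
    by (intro has_derivative_add has_derivative_mult has_derivative_dd_coeffs)
  moreover have "((\<lambda>y. pbar u y * pbar u y + qbar u y * qbar u y) has_derivative (\<lambda>h. 0)) (at x)"
    by (rule has_derivative_transform_within_open[OF has_derivative_const open_noncharacteristic])
       (use x_in_G noncharacteristic pbar_qbar_sq in \<open>auto simp: power2_eq_square\<close>)
  ultimately have "(\<lambda>h. pbar u x * dd (pbar u) x h + dd (pbar u) x h * pbar u x
         + (qbar u x * dd (qbar u) x h + dd (qbar u) x h * qbar u x)) = (\<lambda>h. 0)"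
    by (rule has_derivative_unique)
  from fun_cong[OF this, of h] show ?thesis
    by (simp add: mult.commute)
qed

lemma has_derivative_lu_div_lLu:
  "((\<lambda>y. lu u y / lLu L u y) has_derivative
     (\<lambda>h. pbar u x * dd (pbarL L u) x h + dd (pbar u) x h * pbarL L u x
        + (qbar u x * dd (qbarL L u) x h + dd (qbar u) x h * qbarL L u x))) (at x)"
proof -
  have "((\<lambda>y. pbar u y * pbarL L u y + qbar u y * qbarL L u y) has_derivative
     (\<lambda>h. pbar u x * dd (pbarL L u) x h + dd (pbar u) x h * pbarL L u x
        + (qbar u x * dd (qbarL L u) x h + dd (qbar u) x h * qbarL L u x))) (at x)"
    by (intro has_derivative_add has_derivative_mult has_derivative_dd_coeffs)
  then show ?thesis
    by (rule has_derivative_transform_within_open[OF _ open_noncharacteristic])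
       (use x_in_G noncharacteristic in \<open>auto simp: lu_div_lLu_eq\<close>)
qed

lemma tendsto_pbarL: "((\<lambda>L. pbarL L u x) \<longlongrightarrow> pbar u x) at_top"
proof -
  have "((\<lambda>L. pu u x / sqrt ((pu u x)\<^sup>2 + (qu u x)\<^sup>2 + (vfapp X3 u x / sqrt L)\<^sup>2))
      \<longlongrightarrow> pu u x / sqrt ((pu u x)\<^sup>2 + (qu u x)\<^sup>2 + 0\<^sup>2)) at_top"
    by (intro tendsto_intros tendsto_div_sqrt_at_top[OF tendsto_const])
       (use pu_qu_sq_nonzero[of 0] in simp)
  then show ?thesis
    by (simp add: pbarL_def lLu_def ru_eq[OF x_in_G] pbar_def lu_def)
qed

lemma tendsto_qbarL: "((\<lambda>L. qbarL L u x) \<longlongrightarrow> qbar u x) at_top"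
proof -
  have "((\<lambda>L. qu u x / sqrt ((pu u x)\<^sup>2 + (qu u x)\<^sup>2 + (vfapp X3 u x / sqrt L)\<^sup>2))
      \<longlongrightarrow> qu u x / sqrt ((pu u x)\<^sup>2 + (qu u x)\<^sup>2 + 0\<^sup>2)) at_top"
    by (intro tendsto_intros tendsto_div_sqrt_at_top[OF tendsto_const])
       (use pu_qu_sq_nonzero[of 0] in simp)
  then show ?thesis
    by (simp add: qbarL_def lLu_def ru_eq[OF x_in_G] qbar_def lu_def)
qed

lemma tendsto_rbarL: "((\<lambda>L. rbarL L u x) \<longlongrightarrow> 0) at_top"
proof -
  have "((\<lambda>L. (vfapp X3 u x / sqrt L)
        / sqrt ((pu u x)\<^sup>2 + (qu u x)\<^sup>2 + (vfapp X3 u x / sqrt L)\<^sup>2))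
      \<longlongrightarrow> 0 / sqrt ((pu u x)\<^sup>2 + (qu u x)\<^sup>2 + 0\<^sup>2)) at_top"
    by (intro tendsto_intros tendsto_div_sqrt_at_top[OF tendsto_const])
       (use pu_qu_sq_nonzero[of 0] in simp)
  then show ?thesis
    by (simp add: rbarL_def lLu_def ru_eq[OF x_in_G])
qed

lemma tendsto_lu_div_lLu: "((\<lambda>L. lu u x / lLu L u x) \<longlongrightarrow> 1) at_top"
proof -
  have "((\<lambda>L. pbar u x * pbarL L u x + qbar u x * qbarL L u x)
      \<longlongrightarrow> (pbar u x)\<^sup>2 + (qbar u x)\<^sup>2) at_top"
    unfolding power2_eq_square by (intro tendsto_intros tendsto_pbarL tendsto_qbarL)
  then show ?thesis
    by (simp add: lu_div_lLu_eq[OF noncharacteristic] pbar_qbar_sq[OF noncharacteristic])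
qed

lemma tendsto_dd_pbarL: "((\<lambda>L. dd (pbarL L u) x h) \<longlongrightarrow> dd (pbar u) x h) at_top"
  unfolding dd_eq_derivative[OF has_derivative_pbarL] dd_eq_derivative[OF has_derivative_pbar]
  by (intro tendsto_unit_coord_deriv tendsto_const tendsto_div_sqrt_at_top[OF tendsto_const]
      pu_qu_sq_nonzero)

lemma tendsto_dd_qbarL: "((\<lambda>L. dd (qbarL L u) x h) \<longlongrightarrow> dd (qbar u) x h) at_top"
  unfolding dd_eq_derivative[OF has_derivative_qbarL] dd_eq_derivative[OF has_derivative_qbar]
  by (intro tendsto_unit_coord_deriv tendsto_const tendsto_div_sqrt_at_top[OF tendsto_const])
     (use pu_qu_sq_nonzero[of 0] in \<open>simp add: add.commute\<close>)

lemma tendsto_dd_rbarL: "((\<lambda>L. dd (rbarL L u) x h) \<longlongrightarrow> 0) at_top"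
proof -
  have "((\<lambda>L. dd (rbarL L u) x h) \<longlongrightarrow>
      unit_coord_deriv 0 (pu u x) (qu u x) 0 (dd (pu u) x h) (dd (qu u) x h)) at_top"
    unfolding dd_eq_derivative[OF has_derivative_rbarL]
    by (intro tendsto_unit_coord_deriv tendsto_const tendsto_div_sqrt_at_top[OF tendsto_const])
       (use pu_qu_sq_nonzero[of 0] in simp)
  then show ?thesis
    by (simp add: unit_coord_deriv_def)
qed

lemma tendsto_dd_lu_div_lLu: "((\<lambda>L. dd (\<lambda>y. lu u y / lLu L u y) x h) \<longlongrightarrow> 0) at_top"
proof -
  have "((\<lambda>L. dd (\<lambda>y. lu u y / lLu L u y) x h) \<longlongrightarrow>
      pbar u x * dd (pbar u) x h + dd (pbar u) x h * pbar u x
        + (qbar u x * dd (qbar u) x h + dd (qbar u) x h * qbar u x)) at_top"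
    unfolding dd_eq_derivative[OF has_derivative_lu_div_lLu]
    by (intro tendsto_intros tendsto_pbarL tendsto_qbarL tendsto_dd_pbarL tendsto_dd_qbarL)
  moreover have "pbar u x * dd (pbar u) x h + dd (pbar u) x h * pbar u x
        + (qbar u x * dd (qbar u) x h + dd (qbar u) x h * qbar u x) = 0"
    using pbar_dd_orthogonal[of h] by algebra
  ultimately show ?thesis
    by simp
qed

lemma has_derivative_rbarL_div_sqrt:
  "((\<lambda>y. rbarL L u y / sqrt L) has_derivative (\<lambda>h. dd (rbarL L u) x h / sqrt L)) (at x)"
  by (rule bounded_linear.has_derivative[OF bounded_linear_divide has_derivative_dd_coeffs(5)])

lemma tangential_term_eq:
  "gL L x (lie (e1 u) (nuL L u) x) (e1 u x)
    = qbar u x * dd (pbarL L u) x (e1 u x) - pbar u x * dd (qbarL L u) x (e1 u x)"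
  using pbar_dd_orthogonal[of "nuL L u x"]
  unfolding e1_frame nuL_frame
    lie_frame_vec[OF has_derivative_dd_coeffs(2) has_derivative_minus[OF has_derivative_dd_coeffs(1)]
      has_derivative_const has_derivative_dd_coeffs(3,4) has_derivative_rbarL_div_sqrt]
    gL_frame_vec[OF x1_nonzero]
  by algebra

lemma normal_term_eq:
  assumes "L > 0"
  shows "gL L x (lie (e2 L u) (nuL L u) x) (e2 L u x)
    = rbarL L u x * (pbar u x * dd (pbarL L u) x (e2 L u x) + qbar u x * dd (qbarL L u) x (e2 L u x)
        - dd (rbarL L u) x (nuL L u x))
      - lu u x / lLu L u x * (dd (rbarL L u) x (e2 L u x) + dd (\<lambda>y. lu u y / lLu L u y) x (nuL L u x)
        + (rbarL L u x)\<^sup>2 * pbar u x + lu u x / lLu L u x * pbarL L u x)"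
proof -
  have "((\<lambda>y. - (lu u y / lLu L u y / sqrt L)) has_derivative
      (\<lambda>h. - (dd (\<lambda>y. lu u y / lLu L u y) x h / sqrt L))) (at x)"
    by (intro has_derivative_minus bounded_linear.has_derivative[OF bounded_linear_divide]
        has_derivative_dd[OF has_derivative_lu_div_lLu])
  note lie = lie_frame_vec[OF has_derivative_mult[OF has_derivative_dd_coeffs(5,1)]
      has_derivative_mult[OF has_derivative_dd_coeffs(5,2)] this
      has_derivative_dd_coeffs(3,4) has_derivative_rbarL_div_sqrt]
  show ?thesis
    unfolding e2_frame nuL_frame lie gL_frame_vec[OF x1_nonzero]
    by (rule normal_term_identity[OF pbar_dd_orthogonal pbar_qbar_sq[OF noncharacteristic]
          pbar_qbarL_eq]) (use assms in simp_all)
qed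

lemma linear_dd_coeffs:
  "linear (dd (pbar u) x)" "linear (dd (qbar u) x)" "linear (dd (pbarL L u) x)"
  "linear (dd (qbarL L u) x)" "linear (dd (rbarL L u) x)"
  "linear (dd (\<lambda>y. lu u y / lLu L u y) x)"
  using has_derivative_dd_coeffs has_derivative_dd[OF has_derivative_lu_div_lLu]
  by (blast intro: has_derivative_linear)+

lemma tendsto_nuL: "((\<lambda>L. nuL L u x) \<longlongrightarrow> frame_vec x (pbar u x) (qbar u x) 0) at_top"
  unfolding nuL_frame frame_vec_def
  by (intro tendsto_intros tendsto_pbarL tendsto_qbarL tendsto_div_sqrt_at_top[OF tendsto_rbarL])

lemma tendsto_e2: "((\<lambda>L. e2 L u x) \<longlongrightarrow> 0) at_top"
proof -
  have "((\<lambda>L. e2 L u x) \<longlongrightarrow> frame_vec x (0 * pbar u x) (0 * qbar u x) (- 0)) at_top"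
    unfolding e2_frame frame_vec_def
    by (intro tendsto_intros tendsto_rbarL tendsto_div_sqrt_at_top[OF tendsto_lu_div_lLu])
  then show ?thesis
    by (simp add: frame_vec_def)
qed

lemma tendsto_tangential_term:
  "((\<lambda>L. gL L x (lie (e1 u) (nuL L u) x) (e1 u x))
    \<longlongrightarrow> vfapp X1 (pbar u) x + vfapp X2 (qbar u) x) at_top"
proof -
  have lim: "((\<lambda>L. gL L x (lie (e1 u) (nuL L u) x) (e1 u x))
      \<longlongrightarrow> qbar u x * dd (pbar u) x (e1 u x) - pbar u x * dd (qbar u) x (e1 u x)) at_top"
    unfolding tangential_term_eq by (intro tendsto_intros tendsto_dd_pbarL tendsto_dd_qbarL)
  have e1_expand: "dd f x (e1 u x) = qbar u x * dd f x (X1 x) - pbar u x * dd f x (X2 x)"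
    if "linear (dd f x)" for f
    using that by (simp add: e1_def linear_diff linear_scale)
  have "qbar u x * dd (pbar u) x (e1 u x) - pbar u x * dd (qbar u) x (e1 u x)
      = dd (pbar u) x (X1 x) + dd (qbar u) x (X2 x)"
    unfolding e1_expand[OF linear_dd_coeffs(1)] e1_expand[OF linear_dd_coeffs(2)]
    using pbar_dd_orthogonal[of "X1 x"] pbar_dd_orthogonal[of "X2 x"]
      pbar_qbar_sq[OF noncharacteristic]
    by algebra
  with lim show ?thesis
    unfolding vfapp_def by simp
qed

lemma tendsto_normal_term:
  "((\<lambda>L. gL L x (lie (e2 L u) (nuL L u) x) (e2 L u x)) \<longlongrightarrow> - pbar u x) at_top"
proof -
  note dd_limits =
    tendsto_linear_apply[OF linear_dd_coeffs(3) linear_dd_coeffs(1) tendsto_dd_pbarL tendsto_e2]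
    tendsto_linear_apply[OF linear_dd_coeffs(4) linear_dd_coeffs(2) tendsto_dd_qbarL tendsto_e2]
    tendsto_linear_apply[OF linear_dd_coeffs(5) linear_zero tendsto_dd_rbarL tendsto_e2]
    tendsto_linear_apply[OF linear_dd_coeffs(5) linear_zero tendsto_dd_rbarL tendsto_nuL]
    tendsto_linear_apply[OF linear_dd_coeffs(6) linear_zero tendsto_dd_lu_div_lLu tendsto_nuL]
  have "((\<lambda>L. rbarL L u x * (pbar u x * dd (pbarL L u) x (e2 L u x)
          + qbar u x * dd (qbarL L u) x (e2 L u x) - dd (rbarL L u) x (nuL L u x))
        - lu u x / lLu L u x * (dd (rbarL L u) x (e2 L u x)
          + dd (\<lambda>y. lu u y / lLu L u y) x (nuL L u x)
          + (rbarL L u x)\<^sup>2 * pbar u x + lu u x / lLu L u x * pbarL L u x))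
      \<longlongrightarrow> 0 * (pbar u x * dd (pbar u) x 0 + qbar u x * dd (qbar u) x 0 - 0)
        - 1 * (0 + 0 + 0\<^sup>2 * pbar u x + 1 * pbar u x)) at_top"
    (is "(?normal_term_formula \<longlongrightarrow> _) _")
    by (intro tendsto_intros dd_limits tendsto_rbarL tendsto_lu_div_lLu tendsto_pbarL)
  moreover have "\<forall>\<^sub>F L in at_top.
      ?normal_term_formula L = gL L x (lie (e2 L u) (nuL L u) x) (e2 L u x)"
    using eventually_gt_at_top[of 0] by eventually_elim (simp add: normal_term_eq)
  ultimately show ?thesis
    by (simp add: tendsto_cong)
qed

lemma HL_eq:
  assumes "L > 0"
  shows "HL L u x
    = gL L x (lie (e1 u) (nuL L u) x) (e1 u x) + gL L x (lie (e2 L u) (nuL L u) x) (e2 L u x)"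
  unfolding HL_def
  using LC_inner_unit_field[OF open_noncharacteristic] x_in_G noncharacteristic
    gfield_e1 gfield_e2[OF _ _ assms] by (simp add: Gset_def)

lemma tendsto_HL:
  "((\<lambda>L. HL L u x) \<longlongrightarrow> vfapp X1 (pbar u) x + vfapp X2 (qbar u) x - pbar u x) at_top"
proof -
  have "\<forall>\<^sub>F L in at_top. gL L x (lie (e1 u) (nuL L u) x) (e1 u x)
      + gL L x (lie (e2 L u) (nuL L u) x) (e2 L u x) = HL L u x"
    using eventually_gt_at_top[of 0] by eventually_elim (simp add: HL_eq)
  with tendsto_add[OF tendsto_tangential_term tendsto_normal_term] show ?thesis
    by (simp add: Lim_transform_eventually)
qed

end

theorem proposition3p8:
  fixes u :: "real^3 \<Rightarrow> real" and x :: "real^3"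
  assumes "regular_surface u"
    and "x \<in> Gset" and "u x = 0"
    and "lu u x \<noteq> 0"
  shows "((\<lambda>L. HL L u x) \<longlongrightarrow>
           vfapp X1 (pbar u) x + vfapp X2 (qbar u) x - pbar u x) at_top"
proof -
  interpret noncharacteristic_point u x
    using assms(1,2,4) by unfold_locales (simp_all add: regular_surface_def)
  show ?thesis
    by (rule tendsto_HL)
qed

end
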